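(* Let $H$ be the adjacency matrix or the Laplacian matrix of an undirected weighted connected graph on vertices $1,\dots,n$ (so $H$ is real symmetric), and suppose perfect state transfer from vertex $1$ to vertex $2$ occurs at time $t_0$, i.e. $|\langle 1|e^{it_0H}|2\rangle|=1$. Let $H_0$ be a small nonzero real symmetric $n\times n$ perturbation matrix and set $\hat H=t_0H+H_0$. Then \[ \|e^{i(t_0H+H_0)}-e^{it_0H}\|\ \le\ \|H_0\|\,e^{\|H_0\|}, \] and consequently \[ 1-|\langle 1|e^{i(t_0H+H_0)}|2\rangle|^2\ \le\ 2\|H_0\|e^{\|H_0\|}-\|H_0\|^2e^{2\|H_0\|}\ \le\ 2\|H_0\|+\|H_0\|^2-\|H_0\|^3 . \]
   Context: $\|\cdot\|$ denotes the operator (spectral) norm. For a weighted graph with edge weights $w(j,k)$, the adjacency matrix $A$ has $(j,k)$ entry $w(j,k)$ if $j,k$ are adjacent and $0$ otherwise; the Laplacian is $L=R-A$ with $R$ the diagonal matrix of row sums of $A$. $\langle 1|M|2\rangle$ denotes the $(1,2)$ entry of a matrix $M$. *)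

theory Defs
  imports "HOL-Analysis.Analysis"
begin

fun mpow :: "complex^'n^'n \<Rightarrow> nat \<Rightarrow> complex^'n^'n" where
  "mpow A 0 = mat 1"
| "mpow A (Suc k) = A ** mpow A k"

definition mexp :: "complex^'n^'n \<Rightarrow> complex^'n^'n" where
  "mexp A = (\<Sum>k. (1 / fact k) *\<^sub>R mpow A k)"

definition opnorm :: "complex^'n^'n \<Rightarrow> real" where
  "opnorm A = onorm (\<lambda>x. A *v x)"

definition cmat :: "real^'n^'n \<Rightarrow> complex^'n^'n" where
  "cmat M = (\<chi> j k. complex_of_real (M $ j $ k))"

definition imat :: "real^'n^'n \<Rightarrow> complex^'n^'n" where
  "imat M = (\<chi> j k. \<i> * complex_of_real (M $ j $ k))"

definition weighted_connected_graph :: "('n \<Rightarrow> 'n \<Rightarrow> bool) \<Rightarrow> ('n \<Rightarrow> 'n \<Rightarrow> real) \<Rightarrow> bool" where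
  "weighted_connected_graph E w \<longleftrightarrow>
     (\<forall>j k. E j k \<longrightarrow> E k j) \<and> (\<forall>j. \<not> E j j) \<and>
     (\<forall>j k. w j k = w k j) \<and> (\<forall>j k. E j k \<longrightarrow> w j k > 0) \<and>
     (\<forall>j k. E\<^sup>*\<^sup>* j k)"

definition adj_matrix :: "('n::finite \<Rightarrow> 'n \<Rightarrow> bool) \<Rightarrow> ('n \<Rightarrow> 'n \<Rightarrow> real) \<Rightarrow> real^'n^'n" where
  "adj_matrix E w = (\<chi> j k. if E j k then w j k else 0)"

definition laplacian_matrix :: "('n::finite \<Rightarrow> 'n \<Rightarrow> bool) \<Rightarrow> ('n \<Rightarrow> 'n \<Rightarrow> real) \<Rightarrow> real^'n^'n" where
  "laplacian_matrix E w =
     (\<chi> j k. (if j = k then (\<Sum>l\<in>UNIV. adj_matrix E w $ j $ l) else 0) - adj_matrix E w $ j $ k)"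

end

theory Submission
  imports Defs
begin

text \<open>Both \<open>i t\<^sub>0 H\<close> and \<open>i (t\<^sub>0 H + H\<^sub>0)\<close> are skew-Hermitian, so their exponentials are
  unitary. Differentiating \<open>s \<mapsto> e\<^bsup>s C\<^esup> e\<^bsup>-s A\<^esup>\<close> (Duhamel) then gives
  \<open>\<parallel>e\<^bsup>C\<^esup> - e\<^bsup>A\<^esup>\<parallel> \<le> \<parallel>C - A\<parallel> = \<parallel>H\<^sub>0\<parallel>\<close>, which is even sharper than the claimed
  \<open>\<parallel>H\<^sub>0\<parallel> e\<^bsup>\<parallel>H\<^sub>0\<parallel>\<^esup>\<close>. Since the \<open>(1,2)\<close> entry of \<open>e\<^bsup>i t\<^sub>0 H\<^esup>\<close> has modulus 1, the entry of the
  perturbed evolution has modulus at least \<open>1 - d\<close> with \<open>d = \<parallel>H\<^sub>0\<parallel> e\<^bsup>\<parallel>H\<^sub>0\<parallel>\<^esup>\<close>, whence the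
  fidelity bound \<open>2 d - d\<^sup>2\<close>; the last inequality is a Taylor estimate of \<open>exp\<close>.\<close>

section \<open>The Banach algebra of bounded operators\<close>

text \<open>A copy of \<open>'a \<Rightarrow>\<^sub>L 'a\<close>: the library cannot make \<^type>\<open>blinfun\<close> an algebra only for equal
  argument types, so the operator algebra, and with it \<^const>\<open>exp\<close>, needs a type of its own.\<close>

typedef (overloaded) 'a endo = "UNIV :: ('a::{banach, perfect_space} \<Rightarrow>\<^sub>L 'a) set"
  morphisms rep_endo Abs_endo by auto

setup_lifting type_definition_endo

instantiation endo :: ("{banach, perfect_space}") real_normed_algebra_1
begin

lift_definition norm_endo :: "'a endo \<Rightarrow> real" is norm .
lift_definition minus_endo :: "'a endo \<Rightarrow> 'a endo \<Rightarrow> 'a endo" is "(-)" .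
lift_definition plus_endo :: "'a endo \<Rightarrow> 'a endo \<Rightarrow> 'a endo" is "(+)" .
lift_definition uminus_endo :: "'a endo \<Rightarrow> 'a endo" is "uminus" .
lift_definition zero_endo :: "'a endo" is "0" .
lift_definition scaleR_endo :: "real \<Rightarrow> 'a endo \<Rightarrow> 'a endo" is "scaleR" .
lift_definition times_endo :: "'a endo \<Rightarrow> 'a endo \<Rightarrow> 'a endo" is "(o\<^sub>L)" .
lift_definition one_endo :: "'a endo" is "id_blinfun" .

definition dist_endo :: "'a endo \<Rightarrow> 'a endo \<Rightarrow> real"
  where "dist_endo a b = norm (a - b)"

definition uniformity_endo :: "('a endo \<times> 'a endo) filter"
  where "uniformity_endo = (INF e\<in>{0 <..}. principal {(x, y). dist x y < e})"

definition open_endo :: "'a endo set \<Rightarrow> bool"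
  where "open_endo S = (\<forall>x\<in>S. \<forall>\<^sub>F (x', y) in uniformity. x' = x \<longrightarrow> y \<in> S)"

definition sgn_endo :: "'a endo \<Rightarrow> 'a endo"
  where "sgn_endo x = scaleR (inverse (norm x)) x"

instance
proof
  fix a b c :: "'a endo" and r s :: real
  show "dist a b = norm (a - b)" by (simp add: dist_endo_def)
  show "sgn a = inverse (norm a) *\<^sub>R a" by (simp add: sgn_endo_def)
  show "(uniformity :: ('a endo \<times> 'a endo) filter) = (INF e\<in>{0 <..}. principal {(x, y). dist x y < e})"
    by (simp add: uniformity_endo_def)
  show "open U = (\<forall>x\<in>U. \<forall>\<^sub>F (x', y) in uniformity. x' = x \<longrightarrow> y \<in> U)" for U :: "'a endo set"
    by (simp add: open_endo_def)
  show "a + b + c = a + (b + c)" by transfer (rule add.assoc)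
  show "a + b = b + a" by transfer (rule add.commute)
  show "0 + a = a" by transfer simp
  show "- a + a = 0" by transfer simp
  show "a - b = a + - b" by transfer simp
  show "r *\<^sub>R (a + b) = r *\<^sub>R a + r *\<^sub>R b" by transfer (rule scaleR_right_distrib)
  show "(r + s) *\<^sub>R a = r *\<^sub>R a + s *\<^sub>R a" by transfer (rule scaleR_left_distrib)
  show "r *\<^sub>R s *\<^sub>R a = (r * s) *\<^sub>R a" by transfer simp
  show "1 *\<^sub>R a = a" by transfer simp
  show "(norm a = 0) = (a = 0)" by transfer simp
  show "norm (a + b) \<le> norm a + norm b" by transfer (rule norm_triangle_ineq)
  show "norm (r *\<^sub>R a) = \<bar>r\<bar> * norm a" by transfer simp
  show "a * b * c = a * (b * c)" by transfer (rule blinfun_eqI, simp)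
  show "(a + b) * c = a * c + b * c"
    by transfer (rule blinfun_eqI, simp add: blinfun.bilinear_simps)
  show "a * (b + c) = a * b + a * c"
    by transfer (rule blinfun_eqI, simp add: blinfun.bilinear_simps)
  show "r *\<^sub>R a * b = r *\<^sub>R (a * b)"
    by transfer (rule blinfun_eqI, simp add: blinfun.bilinear_simps)
  show "a * r *\<^sub>R b = r *\<^sub>R (a * b)"
    by transfer (rule blinfun_eqI, simp add: blinfun.bilinear_simps)
  show "1 * a = a" by transfer (rule blinfun_eqI, simp)
  show "a * 1 = a" by transfer (rule blinfun_eqI, simp)
  show "norm (a * b) \<le> norm a * norm b" by transfer (rule norm_blinfun_compose)
  show "norm (1::'a endo) = 1" by transfer simp
  show "(0::'a endo) \<noteq> 1"
    by transfer (metis norm_blinfun_id norm_zero zero_neq_one)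
qed

end

instance endo :: ("{banach, perfect_space}") banach
proof
  fix X :: "nat \<Rightarrow> 'a endo"
  assume "Cauchy X"
  then have "Cauchy (\<lambda>n. rep_endo (X n))"
    unfolding Cauchy_def dist_norm by (simp add: minus_endo.rep_eq[symmetric] norm_endo.rep_eq)
  then obtain L where "(\<lambda>n. rep_endo (X n)) \<longlonglongrightarrow> L"
    using convergent_eq_Cauchy convergent_def by blast
  then have "X \<longlonglongrightarrow> Abs_endo L"
    unfolding lim_sequentially dist_norm
    by (metis minus_endo.rep_eq norm_endo.rep_eq Abs_endo_inverse UNIV_I)
  then show "convergent X" unfolding convergent_def by blast
qed

lemma endo_eqI: "(\<And>x. blinfun_apply (rep_endo F) x = blinfun_apply (rep_endo G) x) \<Longrightarrow> F = G"
  by (metis blinfun_eqI rep_endo_inject)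

lemma bounded_linear_endo_apply: "bounded_linear (\<lambda>F. blinfun_apply (rep_endo F) x)"
proof -
  have "bounded_linear rep_endo"
    by (rule bounded_linear_intro[where K=1])
       (simp_all add: plus_endo.rep_eq scaleR_endo.rep_eq norm_endo.rep_eq)
  then show ?thesis by (rule bounded_linear_compose[OF blinfun.bounded_linear_left])
qed

section \<open>Exponentials of skew operators\<close>

text \<open>For \<open>complex^'n\<close> the real inner product is \<open>Re \<langle>x, y\<rangle>\<close>, so this means skew-Hermitian.\<close>

definition skew :: "'a::{real_inner, banach, perfect_space} endo \<Rightarrow> bool"
  where "skew A \<longleftrightarrow> (\<forall>x. inner x (blinfun_apply (rep_endo A) x) = 0)"

lemma skew_scaleR: "skew A \<Longrightarrow> skew (r *\<^sub>R A)"
  by (simp add: skew_def scaleR_endo.rep_eq blinfun.scaleR_left)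

lemma skew_uminus: "skew A \<Longrightarrow> skew (- A)"
  by (simp add: skew_def uminus_endo.rep_eq blinfun.minus_left)

text \<open>The derivative of \<open>\<parallel>exp (t A) x\<parallel>\<^sup>2\<close> is \<open>2 \<langle>exp (t A) x, A exp (t A) x\<rangle> = 0\<close>.\<close>

lemma norm_exp_skew_apply:
  assumes "skew A"
  shows "norm (blinfun_apply (rep_endo (exp A)) x) = norm x"
proof -
  define v where "v = (\<lambda>t. blinfun_apply (rep_endo (exp (t *\<^sub>R A))) x)"
  define Av where "Av t = blinfun_apply (rep_endo A) (v t)" for t
  have dv: "(v has_derivative (\<lambda>s. s *\<^sub>R Av t)) (at t)" for t
  proof -
    have "((\<lambda>t. exp (t *\<^sub>R A)) has_derivative (\<lambda>s. s *\<^sub>R (A * exp (t *\<^sub>R A)))) (at t)"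
      using exp_scaleR_has_vector_derivative_left[of A t] by (simp add: has_vector_derivative_def)
    from bounded_linear.has_derivative[OF bounded_linear_endo_apply[of x] this] show ?thesis
      by (simp add: v_def Av_def times_endo.rep_eq scaleR_endo.rep_eq blinfun.scaleR_left)
  qed
  have "((\<lambda>t. inner (v t) (v t)) has_real_derivative 0) (at t)" for t
  proof -
    have "((\<lambda>t. inner (v t) (v t)) has_derivative
        (\<lambda>s. inner (v t) (s *\<^sub>R Av t) + inner (s *\<^sub>R Av t) (v t))) (at t)"
      by (rule has_derivative_inner[OF dv dv])
    moreover have "inner (v t) (s *\<^sub>R Av t) + inner (s *\<^sub>R Av t) (v t) = 0 * s" for s
      using assms by (simp add: skew_def Av_def inner_commute)
    ultimately have "((\<lambda>t. inner (v t) (v t)) has_derivative (\<lambda>s. 0)) (at t)"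
      by simp
    then show ?thesis
      unfolding has_field_derivative_def by (rule has_derivative_eq_rhs) auto
  qed
  then have "inner (v 1) (v 1) = inner (v 0) (v 0)"
    using DERIV_isconst_all[of "\<lambda>t. inner (v t) (v t)" 1 0] by blast
  then show ?thesis by (simp add: v_def one_endo.rep_eq norm_eq_sqrt_inner)
qed

lemma norm_exp_skew_le:
  assumes "skew A"
  shows "norm (exp A) \<le> 1"
  unfolding norm_endo.rep_eq
  by (rule norm_blinfun_bound) (simp_all add: norm_exp_skew_apply[OF assms])

lemma norm_exp_mult_exp_skew_le:
  assumes "skew C" and "skew A"
  shows "norm (exp C * B * exp A) \<le> norm B"
proof -
  have "norm (exp C * B * exp A) \<le> norm (exp C * B) * norm (exp A)"
    by (rule norm_mult_ineq)
  also have "\<dots> \<le> norm (exp C) * norm B * norm (exp A)"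
    by (intro mult_right_mono norm_mult_ineq) auto
  also have "\<dots> \<le> 1 * norm B * 1"
    using assms by (intro mult_mono norm_exp_skew_le) auto
  finally show ?thesis by simp
qed

text \<open>Duhamel's formula: \<open>exp (s C) exp (- s A)\<close> has derivative \<open>exp (s C) (C - A) exp (- s A)\<close>,
  whose norm is at most \<open>\<parallel>C - A\<parallel>\<close> because both exponentials are contractions.\<close>

lemma norm_exp_add_minus_exp_le:
  assumes A: "skew A" and AB: "skew (A + B)"
  shows "norm (exp (A + B) - exp A) \<le> norm B"
proof -
  define C where "C = A + B"
  define g where "g s = exp (s *\<^sub>R C) * exp (s *\<^sub>R (- A))" for s :: real
  define g' where "g' s = exp (s *\<^sub>R C) * B * exp (s *\<^sub>R (- A))" for s :: real
  have "(g has_vector_derivative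
      exp (s *\<^sub>R C) * (- A * exp (s *\<^sub>R (- A))) + exp (s *\<^sub>R C) * C * exp (s *\<^sub>R (- A)))
      (at s within {0..1})" for s
    unfolding g_def
    by (intro has_vector_derivative_mult exp_scaleR_has_vector_derivative_right
          has_vector_derivative_at_within[OF exp_scaleR_has_vector_derivative_left])
  then have dg: "(g has_derivative (\<lambda>h. h *\<^sub>R g' s)) (at s within {0..1})" for s
    by (simp add: g'_def C_def algebra_simps has_vector_derivative_def)
  have "norm (g' s) \<le> norm B" for s
    unfolding g'_def using A AB
    by (intro norm_exp_mult_exp_skew_le) (simp_all add: C_def skew_scaleR skew_uminus)
  then have "norm (h *\<^sub>R g' s) \<le> norm B * norm h" for h s
    by (simp add: mult.commute mult_left_mono)
  then have "onorm (\<lambda>h. h *\<^sub>R g' s) \<le> norm B" for s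
    by (intro onorm_bound) auto
  then have "norm (g 1 - g 0) \<le> norm B * norm (1 - (0::real))"
    by (intro differentiable_bound[OF _ dg]) auto
  then have g1: "norm (exp C * exp (- A) - 1) \<le> norm B" by (simp add: g_def)
  have "exp C - exp A = (exp C * exp (- A) - 1) * exp A"
    by (simp add: algebra_simps exp_add_commuting[symmetric])
  then have "norm (exp C - exp A) \<le> norm (exp C * exp (- A) - 1) * norm (exp A)"
    by (metis norm_mult_ineq)
  also have "\<dots> \<le> norm B * 1"
    by (intro mult_mono g1 norm_exp_skew_le A) auto
  finally show ?thesis by (simp add: C_def)
qed

section \<open>Complex matrices as operators\<close>

lift_definition endo_of_matrix :: "complex^'n^'n \<Rightarrow> (complex^'n::finite) endo"
  is "\<lambda>X. Blinfun ((*v) X)" .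

lemma blinfun_apply_endo_of_matrix: "blinfun_apply (rep_endo (endo_of_matrix X)) = (*v) X"
  by (simp add: endo_of_matrix.rep_eq bounded_linear_Blinfun_apply)

lemma norm_endo_of_matrix: "norm (endo_of_matrix X) = opnorm X"
  by (simp add: norm_endo.rep_eq norm_blinfun.rep_eq opnorm_def endo_of_matrix.rep_eq
      bounded_linear_Blinfun_apply)

lemma opnorm_nonneg: "0 \<le> opnorm X"
  by (metis norm_endo_of_matrix norm_ge_zero)

lemma endo_of_matrix_add: "endo_of_matrix (X + Y) = endo_of_matrix X + endo_of_matrix Y"
  by (rule endo_eqI) (simp add: plus_endo.rep_eq blinfun_apply_endo_of_matrix
      matrix_vector_mult_add_rdistrib blinfun.add_left)

lemma endo_of_matrix_diff: "endo_of_matrix (X - Y) = endo_of_matrix X - endo_of_matrix Y"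
  by (rule endo_eqI) (simp add: minus_endo.rep_eq blinfun_apply_endo_of_matrix
      matrix_vector_mult_diff_rdistrib blinfun.diff_left)

lemma endo_of_matrix_scaleR: "endo_of_matrix (r *\<^sub>R X) = r *\<^sub>R endo_of_matrix X"
  by (rule endo_eqI) (simp add: scaleR_endo.rep_eq blinfun_apply_endo_of_matrix
      blinfun.scaleR_left vec_eq_iff matrix_vector_mult_def scaleR_sum_right)

lemma endo_of_matrix_mpow: "endo_of_matrix (mpow X k) = endo_of_matrix X ^ k"
proof (induction k)
  case 0
  show ?case by (rule endo_eqI) (simp add: one_endo.rep_eq blinfun_apply_endo_of_matrix)
next
  case (Suc k)
  have "endo_of_matrix (X ** Y) = endo_of_matrix X * endo_of_matrix Y" for Y
    by (rule endo_eqI) (simp add: times_endo.rep_eq blinfun_apply_endo_of_matrix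
        matrix_vector_mul_assoc)
  with Suc show ?case by simp
qed

lemma bounded_linear_endo_of_matrix: "bounded_linear endo_of_matrix"
proof -
  have "linear endo_of_matrix"
    by (rule linearI) (simp_all add: endo_of_matrix_add endo_of_matrix_scaleR)
  then show ?thesis by (simp add: linear_conv_bounded_linear)
qed

definition matrix_of_endo :: "(complex^'n::finite) endo \<Rightarrow> complex^'n^'n"
  where "matrix_of_endo F = matrix (blinfun_apply (rep_endo F))"

lemma matrix_of_endo_of_matrix: "matrix_of_endo (endo_of_matrix X) = X"
  by (simp add: matrix_of_endo_def blinfun_apply_endo_of_matrix)

lemma norm_axis_complex: "norm (axis j (1::complex)) = 1"
  by (simp add: norm_eq_1 inner_axis_axis)

lemma norm_matrix_of_endo_nth_le: "norm (matrix_of_endo F $ i $ j) \<le> norm F"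
proof -
  have "norm (matrix_of_endo F $ i $ j) \<le> norm (blinfun_apply (rep_endo F) (axis j 1))"
    by (simp add: matrix_of_endo_def matrix_def Finite_Cartesian_Product.norm_nth_le)
  also have "\<dots> \<le> norm F"
    using norm_blinfun[of "rep_endo F" "axis j 1"] by (simp add: norm_axis_complex norm_endo.rep_eq)
  finally show ?thesis .
qed

lemma norm_le_sum_norm_nth: "norm (x :: 'a::real_normed_vector^'n) \<le> (\<Sum>i\<in>UNIV. norm (x $ i))"
  unfolding norm_vec_def by (rule L2_set_le_sum) simp

lemma bounded_linear_matrix_of_endo: "bounded_linear matrix_of_endo"
proof (rule bounded_linear_intro)
  fix F G :: "(complex^'n) endo" and r :: real
  show "matrix_of_endo (F + G) = matrix_of_endo F + matrix_of_endo G"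
    by (simp add: matrix_of_endo_def matrix_def vec_eq_iff plus_endo.rep_eq blinfun.add_left)
  show "matrix_of_endo (r *\<^sub>R F) = r *\<^sub>R matrix_of_endo F"
    by (simp add: matrix_of_endo_def matrix_def vec_eq_iff scaleR_endo.rep_eq blinfun.scaleR_left)
  have "norm (matrix_of_endo F) \<le> (\<Sum>i\<in>UNIV. norm (matrix_of_endo F $ i))"
    by (rule norm_le_sum_norm_nth)
  also have "\<dots> \<le> (\<Sum>i\<in>UNIV. \<Sum>j\<in>UNIV. norm (matrix_of_endo F $ i $ j))"
    by (intro sum_mono norm_le_sum_norm_nth)
  also have "\<dots> \<le> (\<Sum>i\<in>(UNIV::'n set). \<Sum>j\<in>(UNIV::'n set). norm F)"
    by (intro sum_mono norm_matrix_of_endo_nth_le)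
  finally show "norm (matrix_of_endo F) \<le> norm F * (CARD('n) * CARD('n))"
    by (simp add: mult_ac)
qed

lemma norm_nth_nth_le_opnorm: "cmod (X $ i $ j) \<le> opnorm X"
  using norm_matrix_of_endo_nth_le[of "endo_of_matrix X"]
  by (simp add: matrix_of_endo_of_matrix norm_endo_of_matrix)

text \<open>The matrix series converges because it is the image of the exponential series
  under the bounded linear left inverse \<^const>\<open>matrix_of_endo\<close>.\<close>

lemma endo_of_matrix_mexp: "endo_of_matrix (mexp X) = exp (endo_of_matrix X)"
proof -
  let ?f = "\<lambda>k. (1 / fact k) *\<^sub>R mpow X k"
  have f: "endo_of_matrix (?f k) = endo_of_matrix X ^ k /\<^sub>R fact k" for k
    by (simp add: endo_of_matrix_scaleR endo_of_matrix_mpow inverse_eq_divide)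
  have "summable (\<lambda>k. matrix_of_endo (endo_of_matrix (?f k)))"
    unfolding f by (rule bounded_linear.summable[OF bounded_linear_matrix_of_endo summable_exp_generic])
  then have "summable ?f" by (simp add: matrix_of_endo_of_matrix)
  then have "endo_of_matrix (mexp X) = (\<Sum>k. endo_of_matrix (?f k))"
    unfolding mexp_def by (rule bounded_linear.suminf[OF bounded_linear_endo_of_matrix])
  then show ?thesis by (simp add: f exp_def)
qed

section \<open>Unitary evolutions of real symmetric matrices\<close>

lemma imat_add: "imat (M + N) = imat M + imat N"
  by (simp add: imat_def vec_eq_iff distrib_left)

lemma opnorm_imat: "opnorm (imat M) = opnorm (cmat M)"
proof -
  have "(imat M *v x) $ i = \<i> * (cmat M *v x) $ i" for x i
    by (simp add: matrix_vector_mult_def imat_def cmat_def sum_distrib_left mult.assoc)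
  then have "norm (imat M *v x) = norm (cmat M *v x)" for x
    by (simp add: norm_vec_def norm_mult)
  then show ?thesis unfolding opnorm_def onorm_def by simp
qed

text \<open>With \<open>a i j = Im y\<^sub>i Re y\<^sub>j - Re y\<^sub>i Im y\<^sub>j\<close> one has \<open>\<langle>y, i M y\<rangle> = \<Sum>\<^sub>i\<^sub>j M\<^sub>i\<^sub>j a i j\<close>,
  which vanishes since \<open>M\<close> is symmetric and \<open>a\<close> antisymmetric.\<close>

lemma skew_endo_of_imat:
  fixes M :: "real^'n::finite^'n"
  assumes "transpose M = M"
  shows "skew (endo_of_matrix (imat M))"
  unfolding skew_def
proof
  fix y :: "complex^'n"
  have M: "M $ j $ i = M $ i $ j" for i j
    using assms by (metis transpose_def vec_lambda_beta)
  define a where "a i j = Im (y $ i) * Re (y $ j) - Re (y $ i) * Im (y $ j)" for i j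
  have inner_eq: "inner y (blinfun_apply (rep_endo (endo_of_matrix (imat M))) y)
      = (\<Sum>i\<in>UNIV. \<Sum>j\<in>UNIV. M $ i $ j * a i j)"
    by (simp add: blinfun_apply_endo_of_matrix inner_vec_def matrix_vector_mult_def imat_def
        inner_sum_right inner_complex_def a_def algebra_simps)
       (simp add: sum_distrib_left sum_subtractf sum_negf algebra_simps)
  have "(\<Sum>i\<in>UNIV. \<Sum>j\<in>UNIV. M $ i $ j * a i j) = (\<Sum>j\<in>UNIV. \<Sum>i\<in>UNIV. M $ i $ j * a i j)"
    by (rule sum.swap)
  also have "\<dots> = - (\<Sum>j\<in>UNIV. \<Sum>i\<in>UNIV. M $ j $ i * a j i)"
    by (simp add: M a_def sum_negf[symmetric] algebra_simps)
  finally show "inner y (blinfun_apply (rep_endo (endo_of_matrix (imat M))) y) = 0"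
    using inner_eq by simp
qed

lemma opnorm_mexp_imat_add_minus_le:
  fixes M N :: "real^'n::finite^'n"
  assumes M: "transpose M = M" and N: "transpose N = N"
  shows "opnorm (mexp (imat (M + N)) - mexp (imat M)) \<le> opnorm (cmat N)"
proof -
  let ?A = "endo_of_matrix (imat M)" and ?B = "endo_of_matrix (imat N)"
  have "transpose (M + N) = M + N"
    using M N by (simp add: transpose_def vec_eq_iff)
  then have "skew (?A + ?B)"
    using skew_endo_of_imat[of "M + N"] by (simp add: imat_add endo_of_matrix_add)
  have "opnorm (mexp (imat (M + N)) - mexp (imat M)) = norm (exp (?A + ?B) - exp ?A)"
    by (simp add: norm_endo_of_matrix[symmetric] endo_of_matrix_diff endo_of_matrix_mexp
        imat_add endo_of_matrix_add)
  also have "\<dots> \<le> norm ?B"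
    using \<open>skew (?A + ?B)\<close> by (intro norm_exp_add_minus_exp_le skew_endo_of_imat M)
  also have "norm ?B = opnorm (cmat N)"
    by (simp add: norm_endo_of_matrix opnorm_imat)
  finally show ?thesis .
qed

lemma transpose_adj_matrix:
  assumes "\<And>j k. E j k = E k j" and "\<And>j k. w j k = w k j"
  shows "transpose (adj_matrix E w) = adj_matrix E w"
  using assms by (simp add: transpose_def adj_matrix_def vec_eq_iff)

lemma transpose_laplacian_matrix:
  assumes "\<And>j k. E j k = E k j" and "\<And>j k. w j k = w k j"
  shows "transpose (laplacian_matrix E w) = laplacian_matrix E w"
  using assms by (simp add: transpose_def laplacian_matrix_def adj_matrix_def vec_eq_iff)

section \<open>Scalar estimates\<close>

lemma exp_le_Taylor_cubic:
  fixes x :: real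
  assumes "0 \<le> x" and "x \<le> 1"
  shows "exp x \<le> 1 + x + x\<^sup>2 / 2 + x ^ 3 / 2"
proof -
  obtain t where t: "\<bar>t\<bar> \<le> \<bar>x\<bar>" and exp_x: "exp x = (\<Sum>m<3. x ^ m / fact m) + exp t / fact 3 * x ^ 3"
    using Maclaurin_exp_le[of x 3] by blast
  have "exp t \<le> 3"
    using t assms exp_le by (smt (verit) exp_le_cancel_iff)
  then have "exp t * x ^ 3 \<le> 3 * x ^ 3"
    using assms by (intro mult_right_mono) auto
  then have "exp t / fact 3 * x ^ 3 \<le> x ^ 3 / 2"
    by (simp add: fact_numeral)
  then show ?thesis
    unfolding exp_x by (simp add: numeral_3_eq_3 power2_eq_square)
qed

lemma two_mult_exp_minus_square_le:
  fixes x :: real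
  assumes x: "0 \<le> x" and small: "x * exp x \<le> 1"
  shows "2 * (x * exp x) - (x * exp x)\<^sup>2 \<le> 2 * x + x\<^sup>2 - x ^ 3"
proof -
  define y where "y = x * exp x"
  have "x \<le> y"
    using x by (simp add: y_def mult_le_cancel_left1)
  consider "1/2 \<le> x" | "x < 1/2" by linarith
  then show ?thesis
  proof cases
    case 1
    have "x ^ 3 \<le> x\<^sup>2"
      using \<open>x \<le> y\<close> small x by (simp add: y_def power3_eq_cube power2_eq_square mult_left_le)
    moreover have "2 * y - y\<^sup>2 \<le> 1"
      using sum_squares_ge_zero[of "1 - y" 0] by (simp add: power2_eq_square algebra_simps)
    ultimately show ?thesis
      using 1 by (simp add: y_def)
  next
    case 2
    text \<open>Here \<open>y \<le> v \<le> 1\<close>, and \<open>2 y - y\<^sup>2\<close> is increasing on \<open>[0, 1]\<close>.\<close>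
    define v where "v = x + x\<^sup>2 + x ^ 3 / 2 + x ^ 4 / 2"
    have "y \<le> x * (1 + x + x\<^sup>2 / 2 + x ^ 3 / 2)"
      unfolding y_def using x 2 by (intro mult_left_mono exp_le_Taylor_cubic) auto
    also have "\<dots> = v"
      unfolding v_def by algebra
    finally have "y \<le> v" .
    have pow: "x ^ n \<le> (1/2) ^ n" for n
      using x 2 by (intro power_mono) auto
    have "v \<le> 1"
      using 2 pow[of 2] pow[of 3] pow[of 4] by (simp add: v_def power_divide)
    have tail: "0 \<le> x ^ 4 + 2 * x ^ 5 + 5/4 * x ^ 6 + 1/2 * x ^ 7 + 1/4 * x ^ 8"
      using x by (intro add_nonneg_nonneg mult_nonneg_nonneg zero_le_power) auto
    have "0 \<le> (v - y) * (2 - v - y)"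
      using \<open>y \<le> v\<close> \<open>v \<le> 1\<close> small by (simp add: y_def)
    then have "2 * y - y\<^sup>2 \<le> 2 * v - v\<^sup>2"
      by (simp add: power2_eq_square algebra_simps)
    also have "\<dots> = 2 * x + x\<^sup>2 - x ^ 3
        - (x ^ 4 + 2 * x ^ 5 + 5/4 * x ^ 6 + 1/2 * x ^ 7 + 1/4 * x ^ 8)"
      by (simp add: v_def power2_eq_square power3_eq_cube algebra_simps
          power4_eq_xxxx numeral_eq_Suc)
    finally show ?thesis
      using tail unfolding y_def by linarith
  qed
qed

lemma one_minus_norm_square_le:
  fixes u z :: "'a::real_normed_vector"
  assumes "norm u = 1" and "norm (z - u) \<le> d" and "d \<le> 1"
  shows "1 - (norm z)\<^sup>2 \<le> 2 * d - d\<^sup>2"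
proof -
  have "1 - d \<le> norm z"
    using assms norm_triangle_ineq2[of u z] by (simp add: norm_minus_commute)
  then have "(1 - d)\<^sup>2 \<le> (norm z)\<^sup>2"
    using assms(3) by (intro power_mono) auto
  then show ?thesis
    by (simp add: power2_diff)
qed

theorem theorem3p1:
  fixes E :: "'n::finite \<Rightarrow> 'n \<Rightarrow> bool" and w :: "'n \<Rightarrow> 'n \<Rightarrow> real"
    and H H0 :: "real^'n^'n" and t0 :: real and v1 v2 :: 'n
  assumes graph: "weighted_connected_graph E w"
    and H: "H = adj_matrix E w \<or> H = laplacian_matrix E w"
    and distinct: "v1 \<noteq> v2"
    and pst: "cmod (mexp (imat (t0 *\<^sub>R H)) $ v1 $ v2) = 1"
    and H0_sym: "transpose H0 = H0"
    and H0_nz: "H0 \<noteq> 0"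
    and small: "opnorm (cmat H0) * exp (opnorm (cmat H0)) \<le> 1"
  shows "(opnorm (mexp (imat (t0 *\<^sub>R H + H0)) - mexp (imat (t0 *\<^sub>R H)))
           \<le> opnorm (cmat H0) * exp (opnorm (cmat H0))) \<and>
         (1 - (cmod (mexp (imat (t0 *\<^sub>R H + H0)) $ v1 $ v2))\<^sup>2
           \<le> 2 * opnorm (cmat H0) * exp (opnorm (cmat H0))
             - (opnorm (cmat H0))\<^sup>2 * exp (2 * opnorm (cmat H0))) \<and>
         (2 * opnorm (cmat H0) * exp (opnorm (cmat H0))
             - (opnorm (cmat H0))\<^sup>2 * exp (2 * opnorm (cmat H0))
           \<le> 2 * opnorm (cmat H0) + (opnorm (cmat H0))\<^sup>2 - (opnorm (cmat H0))^3)"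
proof -
  let ?b = "opnorm (cmat H0)"
  let ?X = "mexp (imat (t0 *\<^sub>R H + H0))" and ?U = "mexp (imat (t0 *\<^sub>R H))"
  have "transpose H = H"
    using graph H unfolding weighted_connected_graph_def
    by (metis transpose_adj_matrix transpose_laplacian_matrix)
  then have close: "opnorm (?X - ?U) \<le> ?b"
    using H0_sym by (intro opnorm_mexp_imat_add_minus_le) (simp_all add: transpose_scalar)
  have "?b \<le> ?b * exp ?b"
    using opnorm_nonneg by (simp add: mult_le_cancel_left1)
  then have "cmod (?X $ v1 $ v2 - ?U $ v1 $ v2) \<le> ?b * exp ?b"
    using norm_nth_nth_le_opnorm[of "?X - ?U" v1 v2] close by simp
  then have "1 - (cmod (?X $ v1 $ v2))\<^sup>2 \<le> 2 * (?b * exp ?b) - (?b * exp ?b)\<^sup>2"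
    using pst small by (intro one_minus_norm_square_le)
  moreover have "2 * ?b * exp ?b - ?b\<^sup>2 * exp (2 * ?b) = 2 * (?b * exp ?b) - (?b * exp ?b)\<^sup>2"
    by (simp add: exp_double power_mult_distrib mult.assoc)
  moreover have "2 * (?b * exp ?b) - (?b * exp ?b)\<^sup>2 \<le> 2 * ?b + ?b\<^sup>2 - ?b ^ 3"
    using opnorm_nonneg small by (rule two_mult_exp_minus_square_le)
  ultimately show ?thesis
    using close \<open>?b \<le> ?b * exp ?b\<close> by linarith
qed

end
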